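(* For every $n\equiv 3 \pmod{16}$ with $n\geq 19$, there exists an almost 2-perfect maximum 8-cycle packing of $K_n$.
   Context: An 8-cycle packing of $K_n$ on vertex set $\mathcal{X}$ is a triple $(\mathcal{X},\mathcal{C},\mathcal{L})$ with $\mathcal{C}$ a collection of pairwise edge-disjoint 8-cycles of $K_n$ and leave $\mathcal{L}$ the set of edges in no cycle of $\mathcal{C}$; it is maximum if $|\mathcal{L}|$ is minimum among all 8-cycle packings of $K_n$. For an 8-cycle $C$, an inside 8-cycle of $C$ is an 8-cycle on the same vertex set sharing no edge with $C$. The packing is almost 2-perfect if one can choose for each $C\in\mathcal{C}$ an inside 8-cycle $C'$ such that $(\mathcal{X},\{C'\},\mathcal{L})$ is again an 8-cycle packing with the same leave. *)

theory Defs
  imports Main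
begin

definition complete_edges :: "'a set \<Rightarrow> 'a set set" where
  "complete_edges X = {e. e \<subseteq> X \<and> card e = 2}"

definition cycle_edges :: "'a list \<Rightarrow> 'a set set" where
  "cycle_edges vs = {{vs ! i, vs ! ((i + 1) mod length vs)} | i. i < length vs}"

definition is_8cycle :: "'a set \<Rightarrow> 'a set set \<Rightarrow> bool" where
  "is_8cycle X C \<longleftrightarrow> (\<exists>vs. length vs = 8 \<and> distinct vs \<and> set vs \<subseteq> X \<and> C = cycle_edges vs)"

definition cyc_vertices :: "'a set set \<Rightarrow> 'a set" where
  "cyc_vertices C = \<Union>C"

definition is_8cycle_packing :: "'a set \<Rightarrow> 'a set set set \<Rightarrow> 'a set set \<Rightarrow> bool" where
  "is_8cycle_packing X Cs L \<longleftrightarrow>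
     (\<forall>C\<in>Cs. is_8cycle X C) \<and>
     (\<forall>C1\<in>Cs. \<forall>C2\<in>Cs. C1 \<noteq> C2 \<longrightarrow> C1 \<inter> C2 = {}) \<and>
     L = complete_edges X - \<Union>Cs"

definition is_maximum_8cycle_packing :: "'a set \<Rightarrow> 'a set set set \<Rightarrow> 'a set set \<Rightarrow> bool" where
  "is_maximum_8cycle_packing X Cs L \<longleftrightarrow>
     is_8cycle_packing X Cs L \<and>
     (\<forall>Cs' L'. is_8cycle_packing X Cs' L' \<longrightarrow> card L \<le> card L')"

definition is_inside_8cycle :: "'a set \<Rightarrow> 'a set set \<Rightarrow> 'a set set \<Rightarrow> bool" where
  "is_inside_8cycle X C C' \<longleftrightarrow>
     is_8cycle X C' \<and> cyc_vertices C' = cyc_vertices C \<and> C \<inter> C' = {}"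

definition almost_2_perfect :: "'a set \<Rightarrow> 'a set set set \<Rightarrow> 'a set set \<Rightarrow> bool" where
  "almost_2_perfect X Cs L \<longleftrightarrow>
     (\<exists>f. (\<forall>C\<in>Cs. is_inside_8cycle X C (f C)) \<and> inj_on f Cs \<and>
          is_8cycle_packing X (f ` Cs) L)"

end

theory Submission
  imports Defs
begin

(* The leave of an 8-cycle packing of K_n has size congruent to C(n,2) modulo 8, which is 3
   for n = 16k + 3; so a packing leaving only the triangle on {0, 1, 2} is maximum. Such a
   packing is blown up from two small designs: 21 8-cycles decomposing K_19 minus a triangle,
   copied onto the triangle together with each block of 16 further vertices, and two 8-cycles
   decomposing K_{4,4}, copied onto each pair of 4-vertex groups lying in different blocks.
   Both designs have a second decomposition consisting of inside 8-cycles of the first (the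
   two 8-cycles of K_{4,4} are inside each other), and copying it alongside provides the inside
   cycles. Edge-disjointness of the blown-up cycles is never checked directly: they cover every
   edge outside the triangle, and there are exactly (C(n,2) - 3) / 8 of them. *)

section \<open>Cycles given by vertex lists\<close>

(* Edge membership in a concrete cycle becomes decidable by code_simp through its arcs. *)
definition cycle_arcs :: "'a list \<Rightarrow> ('a \<times> 'a) list" where
  "cycle_arcs vs = zip vs (rotate1 vs)"

lemma mod_length_less: "i < length vs \<Longrightarrow> (i + 1) mod length vs < length vs"
  by (rule mod_less_divisor) linarith

lemma cycle_edges_conv_nth:
  "cycle_edges vs = (\<lambda>i. {vs ! i, vs ! ((i + 1) mod length vs)}) ` {..<length vs}"
  by (auto simp: cycle_edges_def)

lemma cycle_edges_conv_arcs: "cycle_edges vs = (\<lambda>(u, v). {u, v}) ` set (cycle_arcs vs)"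
proof -
  have "set (cycle_arcs vs) = (\<lambda>i. (vs ! i, vs ! ((i + 1) mod length vs))) ` {..<length vs}"
    unfolding cycle_arcs_def by (force simp: set_zip nth_rotate1)
  then show ?thesis by (auto simp: cycle_edges_def)
qed

lemma in_cycle_edgesI:
  "(u, v) \<in> set (cycle_arcs vs) \<or> (v, u) \<in> set (cycle_arcs vs) \<Longrightarrow> {u, v} \<in> cycle_edges vs"
  by (force simp: cycle_edges_conv_arcs insert_commute)

lemma cycle_edges_disjointI:
  assumes "\<forall>(u, v)\<in>set (cycle_arcs vs). (u, v) \<notin> set (cycle_arcs ws) \<and> (v, u) \<notin> set (cycle_arcs ws)"
  shows "cycle_edges vs \<inter> cycle_edges ws = {}"
  using assms by (fastforce simp: cycle_edges_conv_arcs doubleton_eq_iff)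

lemma cycle_edges_map: "cycle_edges (map g vs) = image g ` cycle_edges vs"
proof -
  have "cycle_edges (map g vs) = (\<lambda>i. g ` {vs ! i, vs ! ((i + 1) mod length vs)}) ` {..<length vs}"
    unfolding cycle_edges_conv_nth by (intro image_cong) (simp_all add: mod_length_less[simplified])
  then show ?thesis by (simp add: cycle_edges_conv_nth image_image)
qed

lemma cycle_edges_subset_Pow: "cycle_edges vs \<subseteq> Pow (set vs)"
proof -
  have "{vs ! i, vs ! ((i + 1) mod length vs)} \<subseteq> set vs" if "i < length vs" for i
    using that mod_length_less[OF that] by simp
  then show ?thesis by (auto simp: cycle_edges_def)
qed

lemma Union_cycle_edges:
  assumes "vs \<noteq> []"
  shows "\<Union>(cycle_edges vs) = set vs"
proof
  show "\<Union>(cycle_edges vs) \<subseteq> set vs" using cycle_edges_subset_Pow by blast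
  show "set vs \<subseteq> \<Union>(cycle_edges vs)"
  proof
    fix x assume "x \<in> set vs"
    then obtain i where "i < length vs" "x = vs ! i" by (auto simp: in_set_conv_nth)
    then show "x \<in> \<Union>(cycle_edges vs)" unfolding cycle_edges_def by blast
  qed
qed

lemma cycle_edges_map_Int:
  assumes "inj_on g (set vs \<union> set ws)"
  shows "cycle_edges (map g vs) \<inter> cycle_edges (map g ws) = image g ` (cycle_edges vs \<inter> cycle_edges ws)"
proof -
  have "cycle_edges vs \<subseteq> Pow (set vs \<union> set ws)" "cycle_edges ws \<subseteq> Pow (set vs \<union> set ws)"
    using cycle_edges_subset_Pow by blast+
  then show ?thesis
    unfolding cycle_edges_map by (simp add: inj_on_image_Int[OF inj_on_image_Pow[OF assms]])
qed

lemma card_cycle_edge: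
  assumes "distinct vs" and "2 \<le> length vs" and "e \<in> cycle_edges vs"
  shows "card e = 2"
proof -
  obtain i where i: "i < length vs" and e: "e = {vs ! i, vs ! ((i + 1) mod length vs)}"
    using assms(3) by (auto simp: cycle_edges_def)
  have "(i + 1) mod length vs \<noteq> i"
  proof (cases "i + 1 < length vs")
    case False
    with i have "i + 1 = length vs" by simp
    with assms(2) show ?thesis by simp
  qed simp
  moreover have "(i + 1) mod length vs < length vs" using i by (rule mod_length_less)
  ultimately show ?thesis
    using i assms(1) by (simp add: e nth_eq_iff_index_eq)
qed

lemma card_cycle_edges:
  assumes "distinct vs" and "3 \<le> length vs"
  shows "card (cycle_edges vs) = length vs"
proof -
  let ?n = "length vs"
  have "inj_on (\<lambda>i. {vs ! i, vs ! ((i + 1) mod ?n)}) {..<?n}"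
  proof (rule inj_onI)
    fix i j assume i: "i \<in> {..<?n}" and j: "j \<in> {..<?n}"
      and eq: "{vs ! i, vs ! ((i + 1) mod ?n)} = {vs ! j, vs ! ((j + 1) mod ?n)}"
    have "0 < ?n" using assms(2) by linarith
    then have "(i + 1) mod ?n < ?n" "(j + 1) mod ?n < ?n" by simp_all
    with eq consider "i = j" | "i = (j + 1) mod ?n" "(i + 1) mod ?n = j"
      using i j assms(1) by (auto simp: doubleton_eq_iff nth_eq_iff_index_eq)
    then show "i = j"
    proof cases
      case 2
      \<comment> \<open>then i and j are each other's successors, so the cycle has length at most 2\<close>
      show ?thesis
      proof (cases "j + 1 < ?n")
        case True
        with 2 have "j = (j + 2) mod ?n" by simp
        moreover have "j + 2 < ?n \<or> j + 2 = ?n" using True by linarith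
        ultimately show ?thesis using assms(2) by auto
      next
        case False
        with j have "j + 1 = ?n" by simp
        with 2 assms(2) show ?thesis by simp
      qed
    qed
  qed
  then show ?thesis unfolding cycle_edges_conv_nth by (simp add: card_image)
qed

lemma is_8cycle_subset_complete_edges: "is_8cycle X C \<Longrightarrow> C \<subseteq> complete_edges X"
  unfolding is_8cycle_def complete_edges_def
  using cycle_edges_subset_Pow card_cycle_edge by fastforce

lemma card_is_8cycle: "is_8cycle X C \<Longrightarrow> card C = 8"
  unfolding is_8cycle_def using card_cycle_edges by fastforce

lemma is_inside_8cycle_cycle_edges:
  assumes "length ws = 8" "distinct ws" "set ws \<subseteq> X" "set ws = set vs"
    and "cycle_edges vs \<inter> cycle_edges ws = {}"
  shows "is_inside_8cycle X (cycle_edges vs) (cycle_edges ws)"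
proof -
  have "vs \<noteq> []" "ws \<noteq> []" using assms(1,4) by auto
  then show ?thesis
    using assms unfolding is_inside_8cycle_def is_8cycle_def cyc_vertices_def
    by (auto simp: Union_cycle_edges)
qed

section \<open>Maximum and almost 2-perfect packings\<close>

lemma finite_complete_edges: "finite X \<Longrightarrow> finite (complete_edges X)"
  unfolding complete_edges_def by (rule finite_subset[of _ "Pow X"]) auto

lemma card_complete_edges: "finite X \<Longrightarrow> card (complete_edges X) = card X choose 2"
  unfolding complete_edges_def by (simp add: n_subsets)

lemma card_leave_8cycle_packing:
  assumes "finite X" and P: "is_8cycle_packing X Cs L"
  shows "card L + 8 * card Cs = card X choose 2"
proof -
  let ?K = "complete_edges X"
  have cyc: "\<And>C. C \<in> Cs \<Longrightarrow> C \<subseteq> ?K \<and> card C = 8"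
    using P unfolding is_8cycle_packing_def by (meson is_8cycle_subset_complete_edges card_is_8cycle)
  have fin: "finite ?K" using assms(1) by (rule finite_complete_edges)
  have sub: "\<Union>Cs \<subseteq> ?K" using cyc by blast
  have "pairwise disjnt Cs"
    using P by (auto simp: is_8cycle_packing_def pairwise_def disjnt_def)
  then have "card (\<Union>Cs) = sum card Cs"
    using cyc fin by (intro card_Union_disjoint) (auto intro: finite_subset)
  also have "\<dots> = 8 * card Cs" using cyc by simp
  finally have "card (\<Union>Cs) = 8 * card Cs" .
  moreover have "L = ?K - \<Union>Cs" using P by (simp add: is_8cycle_packing_def)
  ultimately show ?thesis
    using card_Diff_subset[OF finite_subset[OF sub fin] sub] card_mono[OF fin sub]
      card_complete_edges[OF assms(1)] by simp
qed

lemma is_maximum_8cycle_packingI: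
  assumes "finite X" "is_8cycle_packing X Cs L" "card L < 8"
  shows "is_maximum_8cycle_packing X Cs L"
  unfolding is_maximum_8cycle_packing_def
proof (intro conjI allI impI)
  fix Cs' L' assume "is_8cycle_packing X Cs' L'"
  then have "card L' + 8 * card Cs' = card L + 8 * card Cs"
    using card_leave_8cycle_packing assms(1,2) by metis
  then have "card L' mod 8 = card L" using assms(3) by (metis mod_less mod_mult_self2)
  then show "card L \<le> card L'" by (metis mod_less_eq_dividend)
qed (fact assms(2))

lemma disjoint_if_card_UN_eq:
  assumes "finite I" and fin: "\<And>i. i \<in> I \<Longrightarrow> finite (A i) \<and> card (A i) = m"
    and card: "card (\<Union>i\<in>I. A i) = m * card I"
    and "i \<in> I" "j \<in> I" "i \<noteq> j"
  shows "A i \<inter> A j = {}"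
proof (rule ccontr)
  assume meet: "A i \<inter> A j \<noteq> {}"
  let ?R = "\<Union>k\<in>I - {i}. A k"
  have "finite ?R" using assms(1) fin by auto
  moreover have "A i \<inter> ?R \<noteq> {}" using meet assms(5,6) by blast
  ultimately have overlap: "1 \<le> card (A i \<inter> ?R)" by (simp add: Suc_le_eq card_gt_0_iff)
  have "card ?R \<le> (\<Sum>k\<in>I - {i}. card (A k))" by (rule card_UN_le) (use assms(1) in auto)
  also have "\<dots> = m * (card I - 1)" using assms(1,4) fin by simp
  finally have rest: "card ?R \<le> m * (card I - 1)" .
  have "(\<Union>k\<in>I. A k) = A i \<union> ?R" using assms(4) by blast
  then have "m * card I + card (A i \<inter> ?R) = m + card ?R"
    using card fin[OF assms(4)] \<open>finite ?R\<close> card_Un_Int[of "A i" ?R] by simp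
  moreover have "m + m * (card I - 1) = m * card I"
    using assms(1,4) by (cases "card I") auto
  ultimately show False using overlap rest by linarith
qed

lemma is_8cycle_packing_if_cover:
  assumes "finite I" and cyc: "\<And>x. x \<in> I \<Longrightarrow> is_8cycle X (C x)"
    and avoid: "\<And>x. x \<in> I \<Longrightarrow> C x \<inter> L = {}" and "L \<subseteq> complete_edges X"
    and cover: "complete_edges X - L \<subseteq> (\<Union>x\<in>I. C x)"
    and card: "card (complete_edges X - L) = 8 * card I"
  shows "is_8cycle_packing X (C ` I) L \<and> inj_on C I"
proof -
  have union: "(\<Union>x\<in>I. C x) = complete_edges X - L"
    using cover cyc avoid is_8cycle_subset_complete_edges by blast
  have fin: "finite (C x) \<and> card (C x) = 8" if "x \<in> I" for x
    using card_is_8cycle[OF cyc[OF that]] card.infinite by force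
  have disj: "C x \<inter> C y = {}" if "x \<in> I" "y \<in> I" "x \<noteq> y" for x y
    using disjoint_if_card_UN_eq[of I C 8, OF assms(1) fin] union card that by auto
  have "inj_on C I"
  proof (rule inj_onI)
    fix x y assume "x \<in> I" "y \<in> I" "C x = C y"
    then show "x = y" using disj fin by (metis card.empty inf.idem zero_neq_numeral)
  qed
  moreover have "is_8cycle_packing X (C ` I) L"
    unfolding is_8cycle_packing_def using cyc disj union assms(4) by blast
  ultimately show ?thesis by blast
qed

lemma almost_2_perfectI:
  assumes "is_8cycle_packing X (C ` I) L" "inj_on C I"
    and "is_8cycle_packing X (C' ` I) L" "inj_on C' I"
    and inside: "\<And>x. x \<in> I \<Longrightarrow> is_inside_8cycle X (C x) (C' x)"
  shows "almost_2_perfect X (C ` I) L"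
proof -
  define f where "f = C' \<circ> inv_into I C"
  have f: "f (C x) = C' x" if "x \<in> I" for x
    unfolding f_def using inv_into_f_f[OF assms(2) that] by simp
  have "inj_on f (C ` I)"
  proof (rule inj_onI)
    fix D E assume "D \<in> C ` I" "E \<in> C ` I" and eq: "f D = f E"
    then obtain x y where "x \<in> I" "y \<in> I" "D = C x" "E = C y" by blast
    with eq f have "C' x = C' y" by simp
    with \<open>x \<in> I\<close> \<open>y \<in> I\<close> have "x = y" using inj_onD[OF assms(4)] by blast
    with \<open>D = C x\<close> \<open>E = C y\<close> show "D = E" by simp
  qed
  moreover have "f ` C ` I = C' ` I" using f by (force simp: image_image)
  ultimately show ?thesis
    unfolding almost_2_perfect_def using assms(3) inside f by (intro exI[of _ f]) auto
qed


section \<open>The two base designs\<close>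

(* K19_design False decomposes K_19 minus the triangle on {0, 1, 2}; the d-th cycle of
   K19_design True is an inside 8-cycle of the d-th cycle of K19_design False. *)
definition K19_design :: "bool \<Rightarrow> nat list list" where
  "K19_design inside = (if \<not> inside then
     [[0, 3, 5, 8, 17, 1, 18, 7], [0, 10, 14, 18, 4, 2, 3, 17], [2, 11, 16, 4, 10, 8, 6, 13],
      [1, 7, 12, 6, 4, 14, 16, 13], [3, 7, 10, 16, 15, 5, 9, 14], [1, 6, 17, 2, 12, 3, 11, 9],
      [8, 9, 18, 17, 13, 14, 11, 15], [1, 4, 3, 6, 15, 2, 18, 8], [1, 11, 12, 18, 5, 0, 4, 15],
      [0, 9, 17, 5, 11, 6, 7, 14], [2, 8, 13, 7, 5, 12, 17, 14], [4, 8, 11, 17, 16, 3, 10, 12],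
      [2, 7, 15, 0, 13, 4, 9, 10], [6, 10, 18, 15, 14, 12, 9, 16], [2, 5, 4, 7, 16, 0, 18, 6],
      [2, 9, 13, 18, 3, 1, 5, 16], [1, 10, 15, 3, 9, 7, 8, 12], [0, 6, 14, 8, 3, 13, 15, 12],
      [5, 6, 9, 15, 17, 4, 11, 13], [0, 8, 16, 1, 14, 5, 10, 11], [7, 11, 18, 16, 12, 13, 10, 17]]
   else
     [[0, 8, 18, 5, 1, 3, 7, 17], [0, 3, 4, 14, 2, 10, 17, 18], [2, 6, 10, 11, 4, 13, 16, 8],
      [1, 14, 6, 7, 13, 12, 4, 16], [3, 9, 15, 10, 5, 7, 14, 16], [1, 12, 9, 2, 11, 6, 3, 17],
      [8, 11, 18, 13, 9, 14, 15, 17], [1, 6, 18, 3, 2, 4, 8, 15], [1, 4, 5, 12, 0, 11, 15, 18],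
      [0, 7, 11, 9, 5, 14, 17, 6], [2, 12, 7, 8, 14, 13, 5, 17], [4, 10, 16, 11, 3, 8, 12, 17],
      [2, 13, 10, 0, 9, 7, 4, 15], [6, 9, 18, 14, 10, 12, 16, 15], [2, 7, 18, 4, 0, 5, 6, 16],
      [2, 5, 3, 13, 1, 9, 16, 18], [1, 8, 9, 10, 3, 12, 15, 7], [0, 13, 8, 6, 12, 14, 3, 15],
      [5, 11, 17, 9, 4, 6, 13, 15], [0, 14, 11, 1, 10, 8, 5, 16], [7, 10, 18, 12, 11, 13, 17, 16]])"

definition K44_cycle :: "bool \<Rightarrow> nat list" where
  "K44_cycle t = (if t then [0, 5, 3, 4, 2, 7, 1, 6] else [0, 4, 1, 5, 2, 6, 3, 7])"

lemma K19_design_arcs: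
  "\<forall>vs\<in>set (K19_design inside). length vs = 8 \<and> distinct vs \<and> (\<forall>x\<in>set vs. x < 19) \<and>
     (\<forall>(u, v)\<in>set (cycle_arcs vs). 3 \<le> u \<or> 3 \<le> v)"
  by (induct inside) code_simp+

lemma K19_design_covers_arcs:
  "\<forall>v\<in>set [3..<19]. \<forall>u\<in>set [0..<v]. \<exists>vs\<in>set (K19_design inside).
     (u, v) \<in> set (cycle_arcs vs) \<or> (v, u) \<in> set (cycle_arcs vs)"
  by (induct inside) code_simp+

lemma K19_design_inside_arcs:
  "list_all2 (\<lambda>vs ws. set ws = set vs \<and>
     (\<forall>(u, v)\<in>set (cycle_arcs vs). (u, v) \<notin> set (cycle_arcs ws) \<and> (v, u) \<notin> set (cycle_arcs ws)))
   (K19_design False) (K19_design True)"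
  by code_simp

lemma K44_cycles_inside_arcs:
  "set (K44_cycle True) = set (K44_cycle False) \<and>
   (\<forall>(u, v)\<in>set (cycle_arcs (K44_cycle False)).
      (u, v) \<notin> set (cycle_arcs (K44_cycle True)) \<and> (v, u) \<notin> set (cycle_arcs (K44_cycle True)))"
  by code_simp

lemma K44_cycles_cover_arcs:
  "\<forall>u\<in>set [0..<4]. \<forall>v\<in>set [4..<8]. \<exists>vs\<in>set [K44_cycle False, K44_cycle True].
     (u, v) \<in> set (cycle_arcs vs) \<or> (v, u) \<in> set (cycle_arcs vs)"
  by code_simp

lemma length_K19_design: "length (K19_design inside) = 21"
  by (simp add: K19_design_def)

lemma K19_design_cycle_vertices:
  assumes "d < 21"
  shows "length (K19_design inside ! d) = 8 \<and> distinct (K19_design inside ! d) \<and>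
    set (K19_design inside ! d) \<subseteq> {..<19}"
  using K19_design_arcs[of inside] nth_mem[of d "K19_design inside"] assms
  by (auto simp: length_K19_design)

lemma K19_design_edge_avoids_triangle:
  assumes "d < 21" "e \<in> cycle_edges (K19_design inside ! d)"
  shows "\<exists>x\<in>e. 3 \<le> x"
  using K19_design_arcs[of inside] nth_mem[of d "K19_design inside"] assms
  by (force simp: length_K19_design cycle_edges_conv_arcs)

lemma K19_design_cover:
  assumes "u < v" "v < 19" "3 \<le> v"
  shows "\<exists>d<21. {u, v} \<in> cycle_edges (K19_design inside ! d)"
proof -
  have "v \<in> set [3..<19]" "u \<in> set [0..<v]" unfolding set_upt using assms by auto
  then obtain vs where "vs \<in> set (K19_design inside)" "{u, v} \<in> cycle_edges vs"
    using K19_design_covers_arcs[of inside] by (blast intro: in_cycle_edgesI)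
  then show ?thesis by (metis in_set_conv_nth length_K19_design)
qed

lemma K19_design_inside:
  assumes "d < 21"
  shows "set (K19_design True ! d) = set (K19_design False ! d) \<and>
    cycle_edges (K19_design False ! d) \<inter> cycle_edges (K19_design True ! d) = {}"
  using list_all2_nthD[OF K19_design_inside_arcs, of d] assms
  by (simp add: length_K19_design cycle_edges_disjointI)

lemma K44_cycle_vertices: "length (K44_cycle t) = 8 \<and> distinct (K44_cycle t) \<and> set (K44_cycle t) \<subseteq> {..<8}"
  by (simp add: K44_cycle_def)

lemma K44_cycles_inside:
  "set (K44_cycle (\<not> t)) = set (K44_cycle t) \<and>
   cycle_edges (K44_cycle t) \<inter> cycle_edges (K44_cycle (\<not> t)) = {}"
  using K44_cycles_inside_arcs cycle_edges_disjointI by (cases t) auto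

lemma K44_cycles_cover:
  assumes "x < 4" "y < 4"
  shows "\<exists>t. {x, y + 4} \<in> cycle_edges (K44_cycle t)"
proof -
  have "x \<in> set [0..<4]" "y + 4 \<in> set [4..<8]" unfolding set_upt using assms by auto
  then obtain vs where "vs \<in> set [K44_cycle False, K44_cycle True]" "{x, y + 4} \<in> cycle_edges vs"
    using K44_cycles_cover_arcs by (blast intro: in_cycle_edgesI)
  then show ?thesis by auto
qed

section \<open>Blowing up to K_{16k+3}\<close>

(* Vertices 0, 1, 2 carry the leave triangle, and 3 + 16 i + 4 a + x (x < 4) is the x-th vertex
   of group a of block i. The K_19 design is copied onto the triangle and block i, the K_{4,4}
   cycles onto group a of block i and group b of block j. *)
definition block_vertex :: "nat \<Rightarrow> nat \<Rightarrow> nat" where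
  "block_vertex i x = (if x < 3 then x else x + 16 * i)"

definition cross_vertex :: "nat \<Rightarrow> nat \<Rightarrow> nat \<Rightarrow> nat \<Rightarrow> nat \<Rightarrow> nat" where
  "cross_vertex i j a b x = (if x < 4 then 3 + 16 * i + 4 * a + x else 3 + 16 * j + 4 * b + (x - 4))"

type_synonym design_index = "(nat \<times> nat) + (nat \<times> nat \<times> nat \<times> nat \<times> bool)"

definition design_indices :: "nat \<Rightarrow> design_index set" where
  "design_indices k = ({..<k} \<times> {..<21}) <+> {(i, j, a, b, t). i < j \<and> j < k \<and> a < 4 \<and> b < 4}"

fun design_cycle :: "bool \<Rightarrow> design_index \<Rightarrow> nat list" where
  "design_cycle inside (Inl (i, d)) = map (block_vertex i) (K19_design inside ! d)"
| "design_cycle inside (Inr (i, j, a, b, t)) = map (cross_vertex i j a b) (K44_cycle (t \<noteq> inside))"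

definition triangle :: "nat set set" where
  "triangle = {{0, 1}, {0, 2}, {1, 2}}"

lemma card_triangle: "card triangle = 3"
  by (simp add: triangle_def doubleton_eq_iff)

lemma inj_block_vertex: "inj (block_vertex i)"
  unfolding inj_def block_vertex_def by auto

lemma inj_on_cross_vertex: "i < j \<Longrightarrow> a < 4 \<Longrightarrow> inj_on (cross_vertex i j a b) {..<8}"
  unfolding inj_on_def cross_vertex_def by auto

lemma design_indicesE:
  assumes "x \<in> design_indices k"
  obtains (block) i d where "x = Inl (i, d)" "i < k" "d < 21"
  | (cross) i j a b t where "x = Inr (i, j, a, b, t)" "i < j" "j < k" "a < 4" "b < 4"
  using assms unfolding design_indices_def by (auto simp: Plus_def)

lemma design_cycle_vertices:
  assumes "x \<in> design_indices k"
  shows "length (design_cycle inside x) = 8 \<and> distinct (design_cycle inside x) \<and>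
    set (design_cycle inside x) \<subseteq> {..<16 * k + 3}"
  using assms
proof (cases rule: design_indicesE)
  case (block i d)
  then show ?thesis
    using K19_design_cycle_vertices[OF block(3), of inside]
    by (auto simp: distinct_map inj_on_subset[OF inj_block_vertex] block_vertex_def)
next
  case (cross i j a b t)
  then show ?thesis
    using K44_cycle_vertices[of "t \<noteq> inside"] inj_on_subset[OF inj_on_cross_vertex[OF cross(2,4)]]
    by (auto simp: distinct_map cross_vertex_def)
qed

lemma design_cycle_edge_notin_triangle:
  assumes "x \<in> design_indices k" "e \<in> cycle_edges (design_cycle inside x)"
  shows "e \<notin> triangle"
proof -
  have "\<exists>v\<in>e. 3 \<le> v"
    using assms(1)
  proof (cases rule: design_indicesE)
    case (block i d)
    then obtain e0 where "e0 \<in> cycle_edges (K19_design inside ! d)" "e = block_vertex i ` e0"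
      using assms(2) by (auto simp: cycle_edges_map)
    moreover from calculation(1) obtain y where "y \<in> e0" "3 \<le> y"
      using K19_design_edge_avoids_triangle[OF block(3)] by blast
    ultimately show ?thesis by (intro bexI[of _ "block_vertex i y"]) (auto simp: block_vertex_def)
  next
    case (cross i j a b t)
    then obtain e0 where "e0 \<in> cycle_edges (K44_cycle (t \<noteq> inside))"
      and "e = cross_vertex i j a b ` e0"
      using assms(2) by (auto simp: cycle_edges_map)
    moreover from calculation(1) obtain y where "y \<in> e0" by (auto simp: cycle_edges_def)
    ultimately show ?thesis
      by (intro bexI[of _ "cross_vertex i j a b y"]) (auto simp: cross_vertex_def)
  qed
  then show ?thesis by (auto simp: triangle_def)
qed

lemma design_cycle_inside:
  assumes "x \<in> design_indices k"
  shows "set (design_cycle True x) = set (design_cycle False x) \<and>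
    cycle_edges (design_cycle False x) \<inter> cycle_edges (design_cycle True x) = {}"
  using assms
proof (cases rule: design_indicesE)
  case (block i d)
  then show ?thesis
    using K19_design_inside[OF block(3)]
      cycle_edges_map_Int[OF inj_on_subset[OF inj_block_vertex subset_UNIV]]
    by simp
next
  case (cross i j a b t)
  have "set (K44_cycle t) \<union> set (K44_cycle (\<not> t)) \<subseteq> {..<8}" using K44_cycle_vertices by blast
  then show ?thesis
    using cross K44_cycles_inside[of t]
      cycle_edges_map_Int[OF inj_on_subset[OF inj_on_cross_vertex[OF cross(2,4)]]]
    by simp
qed

lemma div_mod_16_4: "m = 16 * (m div 16) + 4 * (m mod 16 div 4) + m mod 4" for m :: nat
proof -
  have "m mod 16 mod 4 = m mod 4" by (simp add: mod_mod_cancel)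
  then show ?thesis using div_mult_mod_eq[of m 16] div_mult_mod_eq[of "m mod 16" 4] by linarith
qed

lemma block_edge_in_design:
  assumes "u < v" "3 \<le> v" "v < 16 * k + 3"
    and same_block: "u < 3 \<or> (u - 3) div 16 = (v - 3) div 16"
  shows "\<exists>x\<in>design_indices k. {u, v} \<in> cycle_edges (design_cycle inside x)"
proof -
  define i where "i = (v - 3) div 16"
  have "v - 3 < k * 16" using assms(2,3) by linarith
  then have "i < k" unfolding i_def by (rule less_mult_imp_div_less)
  have v: "v - 3 = 16 * i + (v - 3) mod 16" "(v - 3) mod 16 < 16"
    unfolding i_def by simp_all
  define u' where "u' = (if u < 3 then u else u - 16 * i)"
  define v' where "v' = v - 16 * i"
  have "16 * i \<le> u - 3" if "3 \<le> u"
    using same_block that div_mult_mod_eq[of "u - 3" 16] unfolding i_def by linarith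
  then have "u' < v'" "block_vertex i u' = u"
    using assms(1,2) v unfolding u'_def v'_def block_vertex_def by auto
  moreover have "v' < 19" "3 \<le> v'" "block_vertex i v' = v"
    using assms(2) v unfolding v'_def block_vertex_def by auto
  ultimately obtain d where "d < 21" "{u', v'} \<in> cycle_edges (K19_design inside ! d)"
    and maps: "block_vertex i ` {u', v'} = {u, v}"
    using K19_design_cover[of u' v'] by auto
  then have "{u, v} \<in> cycle_edges (design_cycle inside (Inl (i, d)))"
    by (metis cycle_edges_map design_cycle.simps(1) image_eqI)
  moreover have "Inl (i, d) \<in> design_indices k"
    using \<open>i < k\<close> \<open>d < 21\<close> by (simp add: design_indices_def Plus_def)
  ultimately show ?thesis by blast
qed

lemma cross_edge_in_design:
  assumes "3 \<le> u" "v < 16 * k + 3" and blocks: "(u - 3) div 16 < (v - 3) div 16"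
  shows "\<exists>x\<in>design_indices k. {u, v} \<in> cycle_edges (design_cycle inside x)"
proof -
  have "3 \<le> v" using blocks by (cases "3 \<le> v") auto
  define i j a b p q where "i = (u - 3) div 16" and "j = (v - 3) div 16"
    and "a = (u - 3) mod 16 div 4" and "b = (v - 3) mod 16 div 4"
    and "p = (u - 3) mod 4" and "q = (v - 3) mod 4"
  note defs = i_def j_def a_def b_def p_def q_def
  have "v - 3 < k * 16" using \<open>3 \<le> v\<close> assms(2) by linarith
  then have "i < j" "j < k" using blocks unfolding defs by (simp_all add: less_mult_imp_div_less)
  moreover have "p < 4" "q < 4" "a < 4" "b < 4" unfolding defs by simp_all
  ultimately have index: "Inr (i, j, a, b, t \<noteq> inside) \<in> design_indices k" for t
    by (simp add: design_indices_def Plus_def)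
  obtain t where edge: "{p, q + 4} \<in> cycle_edges (K44_cycle t)"
    using K44_cycles_cover[OF \<open>p < 4\<close> \<open>q < 4\<close>] by blast
  have "u - 3 = 16 * i + 4 * a + p" "v - 3 = 16 * j + 4 * b + q"
    unfolding defs by (fact div_mod_16_4)+
  then have "u = 3 + 16 * i + 4 * a + p" "v = 3 + 16 * j + 4 * b + q"
    using assms(1) \<open>3 \<le> v\<close> by linarith+
  then have maps: "cross_vertex i j a b ` {p, q + 4} = {u, v}"
    using \<open>p < 4\<close> by (simp add: cross_vertex_def insert_commute)
  have cycle: "design_cycle inside (Inr (i, j, a, b, t \<noteq> inside)) =
      map (cross_vertex i j a b) (K44_cycle t)"
    by (cases t; cases inside) simp_all
  have "{u, v} \<in> cycle_edges (design_cycle inside (Inr (i, j, a, b, t \<noteq> inside)))"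
    unfolding cycle cycle_edges_map
    by (rule image_eqI[where f = "image (cross_vertex i j a b)", OF maps[symmetric] edge])
  then show ?thesis using index by blast
qed

lemma design_cycles_cover:
  assumes "e \<in> complete_edges {..<16 * k + 3} - triangle"
  shows "\<exists>x\<in>design_indices k. e \<in> cycle_edges (design_cycle inside x)"
proof -
  obtain x y where "e = {x, y}" "x \<noteq> y" "e \<subseteq> {..<16 * k + 3}"
    using assms unfolding complete_edges_def card_2_iff by auto
  then obtain u v where e: "e = {u, v}" "u < v" "v < 16 * k + 3"
    using linorder_neqE_nat[of x y] by (metis insert_commute insert_subset lessThan_iff)
  have "3 \<le> v"
  proof (rule ccontr)
    assume "\<not> 3 \<le> v"
    with e(2) have "e \<in> triangle" unfolding e(1) triangle_def by auto
    with assms show False by simp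
  qed
  have "(u - 3) div 16 \<le> (v - 3) div 16" using e(2) by (simp add: div_le_mono)
  then consider "u < 3 \<or> (u - 3) div 16 = (v - 3) div 16"
    | "3 \<le> u" "(u - 3) div 16 < (v - 3) div 16"
    by linarith
  then show ?thesis
    using block_edge_in_design[OF e(2) \<open>3 \<le> v\<close> e(3)] cross_edge_in_design[OF _ e(3)] e(1)
    by cases blast+
qed

lemma finite_design_indices: "finite (design_indices k)"
proof -
  have "{(i, j, a, b, t). i < j \<and> j < k \<and> a < (4::nat) \<and> b < (4::nat)}
      \<subseteq> {..<k} \<times> {..<k} \<times> {..<4} \<times> {..<4} \<times> (UNIV :: bool set)"
    by auto
  from finite_subset[OF this] show ?thesis unfolding design_indices_def by simp
qed

lemma card_design_indices: "card (design_indices k) = 21 * k + 16 * (k * (k - 1))"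
proof -
  let ?B = "{(i, j, a, b, t::bool). i < j \<and> j < k \<and> a < (4::nat) \<and> b < (4::nat)}"
  have B: "?B = (SIGMA i:{..<k}. {i<..<k} \<times> {..<4} \<times> {..<4} \<times> (UNIV :: bool set))" by auto
  have gauss: "2 * (\<Sum>i<k. i) = k * (k - 1)" by (induction k) (auto simp: algebra_simps)
  have "card ?B = (\<Sum>i<k. (k - Suc i) * 32)" unfolding B by (simp add: card_cartesian_product)
  also have "\<dots> = 32 * (\<Sum>i<k. k - Suc i)" by (simp add: sum_distrib_left mult.commute)
  also have "\<dots> = 32 * (\<Sum>i<k. i)" using sum.nat_diff_reindex[of "\<lambda>i. i" k] by simp
  also have "\<dots> = 16 * (k * (k - 1))" using gauss by simp
  finally show ?thesis
    using finite_design_indices unfolding design_indices_def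
    by (simp add: card_Plus card_cartesian_product)
qed

lemma card_edges_minus_triangle:
  "card (complete_edges {..<16 * k + 3} - triangle) = 8 * card (design_indices k)"
proof -
  have sub: "triangle \<subseteq> complete_edges {..<16 * k + 3}"
    by (auto simp: triangle_def complete_edges_def)
  have "card (complete_edges {..<16 * k + 3} - triangle) = ((16 * k + 3) choose 2) - 3"
    using card_Diff_subset[OF finite_subset[OF sub finite_complete_edges] sub]
      card_complete_edges[of "{..<16 * k + 3}"] card_triangle by simp
  also have "(16 * k + 3) choose 2 = (16 * k + 3) * (16 * k + 2) div 2" by (simp add: choose_two)
  also have "\<dots> = (16 * k + 3) * (8 * k + 1)" by (simp add: algebra_simps)
  finally have "card (complete_edges {..<16 * k + 3} - triangle) = (16 * k + 3) * (8 * k + 1) - 3" .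
  then show ?thesis by (cases k) (simp_all add: card_design_indices algebra_simps)
qed

lemma design_packing:
  "is_8cycle_packing {..<16 * k + 3} ((\<lambda>x. cycle_edges (design_cycle inside x)) ` design_indices k)
     triangle \<and>
   inj_on (\<lambda>x. cycle_edges (design_cycle inside x)) (design_indices k)"
proof (rule is_8cycle_packing_if_cover[OF finite_design_indices])
  show "is_8cycle {..<16 * k + 3} (cycle_edges (design_cycle inside x))"
    if "x \<in> design_indices k" for x
    using design_cycle_vertices[OF that] unfolding is_8cycle_def by blast
  show "cycle_edges (design_cycle inside x) \<inter> triangle = {}" if "x \<in> design_indices k" for x
    using design_cycle_edge_notin_triangle[OF that] by blast
  show "triangle \<subseteq> complete_edges {..<16 * k + 3}"
    by (auto simp: triangle_def complete_edges_def)
qed (use design_cycles_cover card_edges_minus_triangle in auto)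

theorem lemma3p2:
  fixes n :: nat
  assumes "n mod 16 = 3" and "n \<ge> 19"
  shows "\<exists>Cs L. is_maximum_8cycle_packing {..<n} Cs L \<and> almost_2_perfect {..<n} Cs L"
proof -
  define k where "k = n div 16"
  have n: "n = 16 * k + 3" using assms(1) unfolding k_def by (metis mult_div_mod_eq)
  define C where "C inside x = cycle_edges (design_cycle inside x)" for inside x
  have packing: "is_8cycle_packing {..<n} (C inside ` design_indices k) triangle"
    and inj: "inj_on (C inside) (design_indices k)" for inside
    using design_packing[of k inside] unfolding n C_def by (simp_all add: fun_eq_iff)
  have "is_maximum_8cycle_packing {..<n} (C False ` design_indices k) triangle"
    using is_maximum_8cycle_packingI[OF _ packing] card_triangle by simp
  moreover have "almost_2_perfect {..<n} (C False ` design_indices k) triangle"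
  proof (rule almost_2_perfectI[OF packing inj packing inj])
    fix x assume "x \<in> design_indices k"
    then show "is_inside_8cycle {..<n} (C False x) (C True x)"
      using design_cycle_vertices[of x k True] design_cycle_inside[of x k] unfolding C_def n
      by (intro is_inside_8cycle_cycle_edges) auto
  qed
  ultimately show ?thesis by blast
qed

end
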